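(* Let $T$ be Takagi's function on $[0,1]$, $T(x)=\sum_{n=1}^\infty 2^{-n}\phi^{(n)}(x)$, with $\phi(x)=2x$ on $[0,1/2]$, $\phi(x)=2-2x$ on $[1/2,1]$. Let $x\in[0,1)$ with binary expansion $x=\sum_{k\ge1}2^{-k}\varepsilon_k$ (for dyadic $x$, the expansion eventually all zeros), and suppose $d_1(x):=\lim_{n\to\infty}\frac1n\sum_{k=1}^n\varepsilon_k$ exists; set $d_0(x)=1-d_1(x)$. Let $b_1<b_2<\cdots$ enumerate the indices $k$ with $\varepsilon_k=0$. (i) If $d_1(x)<1$, then $\displaystyle\lim_{h\downarrow0}\frac{T(x+h)-T(x)}{h\log_2(1/|h|)}=d_0(x)-d_1(x)$. (ii) If $d_1(x)=1$, then $\displaystyle\lim_{h\downarrow0}\frac{T(x+h)-T(x)}{h\log_2(1/|h|)}$ exists if and only if $b_{n+1}/b_n\to1$, in which case the limit equals $-1$.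
   Context: For non-dyadic $x$, $\{b_n\}$ coincides with the sequence determined by $1-x=\sum_{n\ge1}2^{-b_n}$. *)

theory Defs
  imports "HOL-Analysis.Analysis" "HOL-Library.Infinite_Set"
begin

definition tent :: "real \<Rightarrow> real" where
  "tent x = (if x \<le> 1/2 then 2 * x else 2 - 2 * x)"

definition takagi :: "real \<Rightarrow> real" where
  "takagi x = (\<Sum>n. (1/2) ^ (Suc n) * (tent ^^ (Suc n)) x)"

text \<open>k-th binary digit of x (k >= 1); for dyadic x this is the expansion ending in zeros.\<close>
definition bdigit :: "real \<Rightarrow> nat \<Rightarrow> nat" where
  "bdigit x k = nat (\<lfloor>2 ^ k * x\<rfloor> mod 2)"

text \<open>Set of indices k >= 1 with binary digit 0; b_{n+1} = enumerate (zero_digits x) n.\<close>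
definition zero_digits :: "real \<Rightarrow> nat set" where
  "zero_digits x = {k. 1 \<le> k \<and> bdigit x k = 0}"

end

theory Submission
  imports Defs
begin

text \<open>
  Continue Takagi's function 1-periodically to \<open>takagi_ext z = (\<Sum>n. dist_int (2^n z) / 2^n)\<close>.
  Each summand is affine, with slope \<open>\<plusminus>1\<close> given by the binary digit \<open>\<epsilon>(n+1)\<close> of \<open>x\<close>, as long as
  \<open>x\<close> and \<open>x + h\<close> lie in the same dyadic interval of length \<open>2^-(n+1)\<close>. Summing the first
  \<open>m \<approx> log\<^sub>2 (1/h)\<close> terms, \<open>T(x+h) - T(x)\<close> is \<open>h\<close> times the excess of zeros over ones among the
  first \<open>m\<close> digits, up to an error \<open>2h\<close> for every level at which \<open>x\<close> and \<open>x + h\<close> are separated;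
  such levels form a run of ones ending at digit \<open>m\<close>. Hence the slope tends to \<open>d\<^sub>0 - d\<^sub>1\<close> as
  soon as the runs of ones ending at \<open>m\<close> have length \<open>o(m)\<close>, which holds if \<open>d\<^sub>1 < 1\<close>, and
  for \<open>d\<^sub>1 = 1\<close> exactly when \<open>b(n+1) / b(n) \<longrightarrow> 1\<close>. If instead \<open>b(n+1) \<ge> (1 + \<delta>) b(n)\<close>
  infinitely often, suitable increments along these long runs produce every slope
  \<open>(\<theta> - 1) / (1 + \<theta>)\<close> with \<open>0 < \<theta> < \<delta>\<close>, so there is no limit.
\<close>

section \<open>Binary digits\<close>

lemma floor_double: "\<lfloor>2 * (z::real)\<rfloor> = 2 * \<lfloor>z\<rfloor> + (if frac z \<ge> 1/2 then 1 else 0)"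
proof -
  have "2 * z = of_int (2 * \<lfloor>z\<rfloor>) + 2 * frac z" by (simp add: frac_def)
  then have "\<lfloor>2 * z\<rfloor> = 2 * \<lfloor>z\<rfloor> + \<lfloor>2 * frac z\<rfloor>" by (metis floor_add_int add.commute)
  moreover have "\<lfloor>2 * frac z\<rfloor> = (if frac z \<ge> 1/2 then 1 else 0)"
    using frac_lt_1[of z] frac_ge_0[of z] by (auto simp: floor_eq_iff)
  ultimately show ?thesis by simp
qed

lemma frac_double: "frac (2 * (z::real)) = 2 * frac z - (if frac z \<ge> 1/2 then 1 else 0)"
  using floor_double[of z] by (simp add: frac_def)

lemma bdigit_Suc: "bdigit x (Suc k) = (if frac (2^k * x) \<ge> 1/2 then 1 else 0)"
proof -
  have e: "(2::real)^Suc k * x = 2 * (2^k * x)" by simp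
  show ?thesis unfolding bdigit_def e floor_double[of "2^k * x"] by auto
qed

lemma frac_pow2_Suc: "frac (2^Suc k * x) = 2 * frac (2^k * x) - real (bdigit x (Suc k))"
proof -
  have e: "(2::real)^Suc k * x = 2 * (2^k * x)" by simp
  show ?thesis unfolding e frac_double[of "2^k * x"] bdigit_Suc[of x k] by auto
qed

lemma bdigit_le_1: "bdigit x k \<le> 1"
  unfolding bdigit_def by auto

definition ones_run :: "real \<Rightarrow> nat \<Rightarrow> nat \<Rightarrow> bool" where
  "ones_run x K m \<longleftrightarrow> (\<forall>i. K < i \<and> i \<le> m \<longrightarrow> bdigit x i = 1)"

lemma ones_run_iff_frac: "ones_run x K (K + j) \<longleftrightarrow> 1 - 1/2^j \<le> frac (2^K * x)"
proof (induction j arbitrary: K)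
  case 0
  then show ?case using frac_ge_0 by (simp add: ones_run_def)
next
  case (Suc j)
  have run_Suc: "ones_run x K (K + Suc j) \<longleftrightarrow> bdigit x (Suc K) = 1 \<and> ones_run x (Suc K) (Suc K + j)"
    unfolding ones_run_def by (auto simp: Suc_le_eq) (metis Suc_lessI)
  have half: "1 - 1/2^Suc j \<le> frac (2^K * x) \<Longrightarrow> 1/2 \<le> frac (2^K * x)"
  proof -
    have "(1::real)/2^Suc j \<le> 1/2" by (simp add: power_le_one_iff)
    then show "1 - 1/2^Suc j \<le> frac (2^K * x) \<Longrightarrow> 1/2 \<le> frac (2^K * x)" by linarith
  qed
  show ?case
    unfolding run_Suc Suc.IH frac_pow2_Suc bdigit_Suc using half by auto
qed

lemma infinite_zero_digits: "infinite (zero_digits x)"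
proof
  assume "finite (zero_digits x)"
  then obtain N where N: "\<forall>k\<in>zero_digits x. k < N"
    using finite_nat_bounded by (metis lessThan_iff subset_eq)
  have "ones_run x N (N + j)" for j
    unfolding ones_run_def
  proof (intro allI impI)
    fix i assume "N < i \<and> i \<le> N + j"
    then have "i \<notin> zero_digits x" and "1 \<le> i" using N by auto
    then show "bdigit x i = 1" using bdigit_le_1[of x i] by (auto simp: zero_digits_def)
  qed
  then have run: "1 - (1/2)^j \<le> frac (2^N * x)" for j
    by (simp add: ones_run_iff_frac power_one_over)
  obtain j where "(1/2::real)^j < 1 - frac (2^N * x)"
    using frac_lt_1[of "2^N * x"] real_arch_pow_inv[of "1 - frac (2^N * x)" "1/2"] by auto
  with run[of j] show False by linarith
qed

section \<open>Takagi's function on the real line\<close>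

definition dist_int :: "real \<Rightarrow> real" where
  "dist_int z = (if frac z \<le> 1/2 then frac z else 1 - frac z)"

lemma dist_int_nonneg: "0 \<le> dist_int z" and dist_int_le_half: "dist_int z \<le> 1/2"
  unfolding dist_int_def using frac_ge_0[of z] frac_lt_1[of z] by auto

lemma dist_int_le: "dist_int z \<le> \<bar>z - of_int n\<bar>"
proof -
  have z: "z = of_int \<lfloor>z\<rfloor> + frac z" by (simp add: frac_def)
  show ?thesis
  proof (cases "n \<le> \<lfloor>z\<rfloor>")
    case True
    then have "of_int n \<le> (of_int \<lfloor>z\<rfloor>::real)" by simp
    then show ?thesis using frac_ge_0[of z] unfolding dist_int_def by (subst z, auto)
  next
    case False
    then have "of_int n \<ge> (of_int \<lfloor>z\<rfloor>::real) + 1" by linarith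
    then show ?thesis using frac_lt_1[of z] unfolding dist_int_def by (subst z, auto)
  qed
qed

lemma dist_int_attained: "\<exists>n. dist_int z = \<bar>z - of_int n\<bar>"
proof (cases "frac z \<le> 1/2")
  case True
  then have "dist_int z = \<bar>z - of_int \<lfloor>z\<rfloor>\<bar>"
    unfolding dist_int_def using frac_ge_0[of z] by (simp add: frac_def)
  then show ?thesis by blast
next
  case False
  then have "dist_int z = \<bar>z - of_int (\<lfloor>z\<rfloor> + 1)\<bar>"
    unfolding dist_int_def using frac_lt_1[of z] by (simp add: frac_def)
  then show ?thesis by blast
qed

lemma dist_int_lipschitz: "\<bar>dist_int a - dist_int b\<bar> \<le> \<bar>a - b\<bar>"
proof -
  obtain na nb where "dist_int a = \<bar>a - of_int na\<bar>" "dist_int b = \<bar>b - of_int nb\<bar>"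
    using dist_int_attained by metis
  moreover have "dist_int a \<le> \<bar>a - of_int nb\<bar>" "dist_int b \<le> \<bar>b - of_int na\<bar>"
    by (rule dist_int_le)+
  ultimately show ?thesis by linarith
qed

lemma dist_int_add_of_int: "dist_int (z + of_int n) = dist_int z"
  unfolding dist_int_def by simp

lemma dist_int_diff_same_half:
  assumes "\<lfloor>2 * a\<rfloor> = \<lfloor>2 * b\<rfloor>"
  shows "dist_int b - dist_int a = (if frac a \<ge> 1/2 then -1 else 1) * (b - a)"
proof -
  let ?da = "(if frac a \<ge> 1/2 then 1 else 0)::int"
  let ?db = "(if frac b \<ge> 1/2 then 1 else 0)::int"
  have "2 * \<lfloor>a\<rfloor> + ?da = 2 * \<lfloor>b\<rfloor> + ?db"
    using assms floor_double[of a] floor_double[of b] by simp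
  then have fl: "\<lfloor>a\<rfloor> = \<lfloor>b\<rfloor>" and same: "?da = ?db" by (auto split: if_splits) presburger+
  have "frac b - frac a = b - a" using fl by (simp add: frac_def)
  then show ?thesis using same unfolding dist_int_def by (auto split: if_splits)
qed

lemma dist_int_double: "tent (2 * dist_int z) = 2 * dist_int (2 * z)"
  using frac_ge_0[of z] frac_lt_1[of z]
  unfolding tent_def dist_int_def frac_double[of z] by auto

text \<open>On \<open>[0, 1]\<close> the \<open>n\<close>-th tent iterate is \<open>2 dist_int (2^(n-1) x)\<close> (\<open>funpow_tent\<close>), so this
  continues Takagi's function 1-periodically to the whole line.\<close>

definition takagi_ext :: "real \<Rightarrow> real" where
  "takagi_ext z = (\<Sum>n. dist_int (2^n * z) / 2^n)"

lemma summable_takagi_ext: "summable (\<lambda>n. dist_int (2^n * z) / 2^n)"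
proof (rule summable_comparison_test'[of "\<lambda>n. (1/2::real)^n" 0])
  fix n :: nat
  have "dist_int (2^n * z) / 2^n \<le> 1 / 2^n"
    using dist_int_le_half[of "2^n * z"] by (simp add: divide_right_mono)
  then show "norm (dist_int (2^n * z) / 2^n) \<le> (1/2)^n"
    using dist_int_nonneg[of "2^n * z"] by (simp add: power_one_over)
qed simp

lemma takagi_ext_split:
  "takagi_ext z = (\<Sum>n<m. dist_int (2^n * z) / 2^n) + takagi_ext (2^m * z) / 2^m"
proof -
  have "(\<lambda>n. dist_int (2^(n + m) * z) / 2^(n + m)) = (\<lambda>n. dist_int (2^n * (2^m * z)) / 2^n / 2^m)"
    by (simp add: power_add mult.assoc)
  then have "(\<Sum>n. dist_int (2^(n + m) * z) / 2^(n + m)) = takagi_ext (2^m * z) / 2^m"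
    unfolding takagi_ext_def using suminf_divide[OF summable_takagi_ext[of "2^m * z"]] by simp
  then show ?thesis
    unfolding takagi_ext_def using suminf_split_initial_segment[OF summable_takagi_ext, of z m] by simp
qed

lemma takagi_ext_bounds: "0 \<le> takagi_ext z" "takagi_ext z \<le> 1"
proof -
  show "0 \<le> takagi_ext z"
    unfolding takagi_ext_def by (rule suminf_nonneg[OF summable_takagi_ext]) (simp add: dist_int_nonneg)
  have "takagi_ext z \<le> (\<Sum>n. (1/2::real)^n / 2)"
    unfolding takagi_ext_def
  proof (rule suminf_le[OF _ summable_takagi_ext])
    fix n :: nat
    have "dist_int (2^n * z) / 2^n \<le> (1/2) / 2^n"
      using dist_int_le_half[of "2^n * z"] by (rule divide_right_mono) simp
    then show "dist_int (2^n * z) / 2^n \<le> (1/2)^n / 2" by (simp add: power_one_over)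
  qed (simp add: summable_divide)
  also have "\<dots> = 1"
    using suminf_divide[of "\<lambda>n. (1/2::real)^n" 2] suminf_geometric[of "1/2::real"] by simp
  finally show "takagi_ext z \<le> 1" .
qed

lemma takagi_ext_add_of_int: "takagi_ext (z + of_int k) = takagi_ext z"
proof -
  have "dist_int (2^n * (z + of_int k)) = dist_int (2^n * z)" for n :: nat
  proof -
    have "2^n * (z + of_int k) = 2^n * z + of_int (2^n * k)" by (simp add: algebra_simps)
    then show ?thesis by (simp only: dist_int_add_of_int)
  qed
  then show ?thesis unfolding takagi_ext_def by simp
qed

lemma takagi_ext_of_int: "takagi_ext (of_int k) = 0"
  using takagi_ext_add_of_int[of 0 k] by (simp add: takagi_ext_def dist_int_def)

lemma takagi_ext_inverse_pow2: "takagi_ext (1/2^t) = real t / 2^t"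
proof -
  have "dist_int (2^n * (1/2^t)) / 2^n = 1/2^t" if "n < t" for n
  proof -
    have e: "(2::real)^n * (1/2^t) = 1/2^(t - n)" using that by (simp add: power_diff)
    have "(2::real)^1 \<le> 2^(t - n)" by (rule power_increasing) (use that in auto)
    then have "(1::real)/2^(t - n) \<le> 1/2" by (simp add: divide_le_cancel)
    then have "dist_int (2^n * (1/2^t)) = 1/2^(t - n)" unfolding e dist_int_def by (simp add: frac_eq)
    then show ?thesis using that by (simp add: power_diff)
  qed
  moreover have "takagi_ext (2^t * (1/2^t)) = 0" using takagi_ext_of_int[of 1] by simp
  ultimately show ?thesis using takagi_ext_split[of "1/2^t" t] by simp
qed

lemma funpow_tent: "0 \<le> x \<Longrightarrow> x \<le> 1 \<Longrightarrow> (tent ^^ Suc n) x = 2 * dist_int (2^n * x)"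
proof (induction n)
  case 0
  have "2 * dist_int (x/2) = x" using 0 unfolding dist_int_def by (simp add: frac_eq)
  then show ?case using dist_int_double[of "x/2"] by simp
next
  case (Suc n)
  then show ?case by (simp add: dist_int_double mult.assoc)
qed

lemma takagi_eq_takagi_ext: "0 \<le> x \<Longrightarrow> x \<le> 1 \<Longrightarrow> takagi x = takagi_ext x"
  unfolding takagi_def takagi_ext_def using funpow_tent by (simp add: power_one_over)

section \<open>Increments of Takagi's function\<close>

text \<open>Zeros minus ones among the first \<open>m\<close> digits, so \<open>digit_excess x n / n\<close> tends to \<open>d\<^sub>0 - d\<^sub>1\<close>.\<close>

definition digit_excess :: "real \<Rightarrow> nat \<Rightarrow> real" where
  "digit_excess a m = (\<Sum>n<m. 1 - 2 * real (bdigit a (Suc n)))"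

lemma dist_int_increment:
  "\<bar>(dist_int (2^n * y) - dist_int (2^n * a)) / 2^n - (y - a) * (1 - 2 * real (bdigit a (Suc n)))\<bar>
     \<le> (if \<lfloor>2^Suc n * a\<rfloor> = \<lfloor>2^Suc n * y\<rfloor> then 0 else 2 * \<bar>y - a\<bar>)"
proof (cases "\<lfloor>2^Suc n * a\<rfloor> = \<lfloor>2^Suc n * y\<rfloor>")
  case True
  have "\<lfloor>2 * (2^n * a)\<rfloor> = \<lfloor>2 * (2^n * y)\<rfloor>" using True by (simp add: mult.assoc)
  from dist_int_diff_same_half[OF this]
  have "dist_int (2^n * y) - dist_int (2^n * a) = 2^n * ((1 - 2 * real (bdigit a (Suc n))) * (y - a))"
    by (simp add: bdigit_Suc algebra_simps split: if_splits)
  then show ?thesis using True by simp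
next
  case False
  have "\<bar>dist_int (2^n * y) - dist_int (2^n * a)\<bar> \<le> 2^n * \<bar>y - a\<bar>"
    using dist_int_lipschitz[of "2^n * y" "2^n * a"] by (simp add: abs_mult flip: right_diff_distrib)
  then have "\<bar>(dist_int (2^n * y) - dist_int (2^n * a)) / 2^n\<bar> \<le> \<bar>y - a\<bar>"
    by (simp add: divide_le_eq mult.commute)
  moreover have "\<bar>(y - a) * (1 - 2 * real (bdigit a (Suc n)))\<bar> \<le> \<bar>y - a\<bar>"
    using bdigit_le_1[of a "Suc n"] by (cases "bdigit a (Suc n)") (auto simp: abs_mult)
  ultimately show ?thesis
    using False abs_triangle_ineq4[of "(dist_int (2^n * y) - dist_int (2^n * a)) / 2^n"
        "(y - a) * (1 - 2 * real (bdigit a (Suc n)))"] by simp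
qed

lemma takagi_ext_tail_bound: "\<bar>(takagi_ext (2^m * y) - takagi_ext (2^m * a)) / 2^m\<bar> \<le> 1/2^m"
proof -
  have "\<bar>takagi_ext (2^m * y) - takagi_ext (2^m * a)\<bar> \<le> 1"
    using takagi_ext_bounds[of "2^m * y"] takagi_ext_bounds[of "2^m * a"] by linarith
  then show ?thesis by (simp add: divide_right_mono)
qed

lemma takagi_ext_increment:
  "\<bar>(takagi_ext y - takagi_ext a) - (y - a) * digit_excess a m
      - (takagi_ext (2^m * y) - takagi_ext (2^m * a)) / 2^m\<bar>
     \<le> 2 * \<bar>y - a\<bar> * card {n. n < m \<and> \<lfloor>2^Suc n * a\<rfloor> \<noteq> \<lfloor>2^Suc n * y\<rfloor>}"
proof -
  let ?t = "\<lambda>n. (dist_int (2^n * y) - dist_int (2^n * a)) / 2^n - (y - a) * (1 - 2 * real (bdigit a (Suc n)))"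
  have excess: "(y - a) * digit_excess a m = (\<Sum>n<m. (y - a) * (1 - 2 * real (bdigit a (Suc n))))"
    unfolding digit_excess_def by (rule sum_distrib_left)
  have head: "takagi_ext y - takagi_ext a - (takagi_ext (2^m * y) - takagi_ext (2^m * a)) / 2^m
      = (\<Sum>n<m. (dist_int (2^n * y) - dist_int (2^n * a)) / 2^n)"
    using takagi_ext_split[of y m] takagi_ext_split[of a m] by (simp add: sum_subtractf diff_divide_distrib)
  have "(takagi_ext y - takagi_ext a) - (y - a) * digit_excess a m
      - (takagi_ext (2^m * y) - takagi_ext (2^m * a)) / 2^m = (\<Sum>n<m. ?t n)"
    unfolding sum_subtractf excess head[symmetric] by simp
  moreover have "\<bar>\<Sum>n<m. ?t n\<bar> \<le> (\<Sum>n<m. \<bar>?t n\<bar>)" by (rule sum_abs)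
  moreover have "(\<Sum>n<m. \<bar>?t n\<bar>)
      \<le> (\<Sum>n<m. if \<lfloor>2^Suc n * a\<rfloor> = \<lfloor>2^Suc n * y\<rfloor> then 0 else 2 * \<bar>y - a\<bar>)"
    using dist_int_increment by (intro sum_mono) blast
  moreover have "(\<Sum>n<m. if \<lfloor>2^Suc n * a\<rfloor> = \<lfloor>2^Suc n * y\<rfloor> then 0 else 2 * \<bar>y - a\<bar>)
      = 2 * \<bar>y - a\<bar> * card {n. n < m \<and> \<lfloor>2^Suc n * a\<rfloor> \<noteq> \<lfloor>2^Suc n * y\<rfloor>}"
    by (simp add: sum.If_cases Collect_conj_eq Collect_neg_eq lessThan_def Int_commute)
  ultimately show ?thesis by linarith
qed

lemma takagi_ext_increment_exact:
  assumes "\<And>n. n < m \<Longrightarrow> \<lfloor>2^Suc n * a\<rfloor> = \<lfloor>2^Suc n * y\<rfloor>"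
  shows "takagi_ext y - takagi_ext a
           = (y - a) * digit_excess a m + (takagi_ext (2^m * y) - takagi_ext (2^m * a)) / 2^m"
proof -
  have none: "{n. n < m \<and> \<lfloor>2^Suc n * a\<rfloor> \<noteq> \<lfloor>2^Suc n * y\<rfloor>} = {}" using assms by auto
  show ?thesis using takagi_ext_increment[of y a m] unfolding none by simp
qed

lemma takagi_ext_modulus: "\<bar>takagi_ext y - takagi_ext a\<bar> \<le> real m * \<bar>y - a\<bar> + 1/2^m"
proof -
  have "\<bar>dist_int (2^n * y) - dist_int (2^n * a)\<bar> / 2^n \<le> \<bar>y - a\<bar>" for n :: nat
  proof -
    have "\<bar>dist_int (2^n * y) - dist_int (2^n * a)\<bar> \<le> 2^n * \<bar>y - a\<bar>"
      using dist_int_lipschitz[of "2^n * y" "2^n * a"] by (simp add: abs_mult flip: right_diff_distrib)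
    then show ?thesis by (simp add: divide_le_eq mult.commute)
  qed
  then have "\<bar>\<Sum>n<m. (dist_int (2^n * y) - dist_int (2^n * a)) / 2^n\<bar> \<le> real m * \<bar>y - a\<bar>"
    using order_trans[OF sum_abs sum_mono[of "{..<m}" "\<lambda>n. \<bar>(dist_int (2^n * y) - dist_int (2^n * a)) / 2^n\<bar>"
          "\<lambda>_. \<bar>y - a\<bar>"]] by simp
  moreover have "takagi_ext y - takagi_ext a = (\<Sum>n<m. (dist_int (2^n * y) - dist_int (2^n * a)) / 2^n)
      + (takagi_ext (2^m * y) - takagi_ext (2^m * a)) / 2^m"
    using takagi_ext_split[of y m] takagi_ext_split[of a m] by (simp add: sum_subtractf diff_divide_distrib)
  ultimately show ?thesis using takagi_ext_tail_bound[of m y a] by linarith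
qed

lemma ones_run_of_floor_ne:
  assumes h: "0 < h" "h \<le> 1/2^m" and "K \<le> m" and "\<lfloor>2^K * x\<rfloor> \<noteq> \<lfloor>2^K * (x + h)\<rfloor>"
  shows "ones_run x K m"
proof -
  have "\<lfloor>2^K * x\<rfloor> \<le> \<lfloor>2^K * (x + h)\<rfloor>" using h by (intro floor_mono) (simp add: algebra_simps)
  then have "real_of_int \<lfloor>2^K * x\<rfloor> + 1 \<le> 2^K * (x + h)"
    using assms(4) of_int_floor_le[of "2^K * (x + h)"] by linarith
  then have "frac (2^K * x) \<ge> 1 - 2^K * h" by (simp add: frac_def algebra_simps)
  moreover have "(2::real)^K * h \<le> 2^K * (1/2^m)" using h by (intro mult_left_mono) auto
  moreover have "(2::real)^K * (1/2^m) = 1/2^(m - K)" using \<open>K \<le> m\<close> by (simp add: power_diff)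
  ultimately have "ones_run x K (K + (m - K))" unfolding ones_run_iff_frac by linarith
  then show ?thesis using \<open>K \<le> m\<close> by simp
qed

lemma card_floor_ne_le:
  assumes h: "0 < h" "h \<le> 1/2^m" and runs: "\<And>K. ones_run x K m \<Longrightarrow> real m - real K \<le> e"
  shows "real (card {n. n < m \<and> \<lfloor>2^Suc n * x\<rfloor> \<noteq> \<lfloor>2^Suc n * (x + h)\<rfloor>}) \<le> e + 1"
proof (cases "{n. n < m \<and> \<lfloor>2^Suc n * x\<rfloor> \<noteq> \<lfloor>2^Suc n * (x + h)\<rfloor>} = {}")
  case True
  have "0 \<le> e" using runs[of m] by (simp add: ones_run_def)
  then show ?thesis unfolding True by simp
next
  case False
  define Bad where "Bad = {n. n < m \<and> \<lfloor>2^Suc n * x\<rfloor> \<noteq> \<lfloor>2^Suc n * (x + h)\<rfloor>}"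
  have fin: "finite Bad" by (rule finite_subset[of _ "{..<m}"]) (auto simp: Bad_def)
  define n0 where "n0 = Min Bad"
  have n0: "n0 \<in> Bad" using False fin unfolding n0_def Bad_def by (intro Min_in) auto
  have "Bad \<subseteq> {n0..<m}" using fin unfolding n0_def by (auto simp: Bad_def)
  then have "card Bad \<le> m - n0" using card_mono[of "{n0..<m}" Bad] by simp
  moreover have "real m - real (Suc n0) \<le> e"
    using n0 by (intro runs ones_run_of_floor_ne[OF h]) (auto simp: Bad_def)
  moreover have "n0 < m" using n0 by (simp add: Bad_def)
  ultimately have "real (card Bad) \<le> e + 1"
    using of_nat_mono[of "card Bad" "m - n0", where 'a=real] by (simp add: of_nat_diff)
  then show ?thesis unfolding Bad_def .
qed

lemma takagi_ext_increment_estimate: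
  assumes h: "0 < h" "h \<le> 1/2^m" "1/2^Suc m < h"
    and runs: "\<And>K. ones_run x K m \<Longrightarrow> real m - real K \<le> e"
  shows "\<bar>takagi_ext (x + h) - takagi_ext x - h * digit_excess x m\<bar> \<le> 2 * h * (e + 2)"
proof -
  define T where "T = (takagi_ext (2^m * (x + h)) - takagi_ext (2^m * x)) / 2^m"
  have "\<bar>takagi_ext (x + h) - takagi_ext x - h * digit_excess x m - T\<bar>
      \<le> 2 * h * card {n. n < m \<and> \<lfloor>2^Suc n * x\<rfloor> \<noteq> \<lfloor>2^Suc n * (x + h)\<rfloor>}"
    using takagi_ext_increment[of "x + h" x m] h(1) unfolding T_def by simp
  also have "\<dots> \<le> 2 * h * (e + 1)"
    using card_floor_ne_le[OF h(1,2) runs] h by (intro mult_left_mono) auto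
  finally have "\<bar>takagi_ext (x + h) - takagi_ext x - h * digit_excess x m - T\<bar> \<le> 2 * h * (e + 1)" .
  moreover have "\<bar>T\<bar> < 2 * h"
    using takagi_ext_tail_bound[of m "x + h" x] h(3) unfolding T_def by simp
  ultimately show ?thesis by (simp add: algebra_simps abs_le_iff abs_less_iff)
qed

section \<open>The slope when runs of ones are short\<close>

definition dyadic_index :: "real \<Rightarrow> nat" where
  "dyadic_index h = nat \<lfloor>log 2 (1/h)\<rfloor>"

lemma dyadic_index_bounds:
  assumes "0 < h" "h \<le> 1"
  shows "h \<le> 1/2^dyadic_index h" "1/2^Suc (dyadic_index h) < h"
    and "real (dyadic_index h) \<le> log 2 (1/h)" "log 2 (1/h) < real (dyadic_index h) + 1"
proof -
  have "0 \<le> log 2 (1/h)" using assms by simp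
  then show m: "real (dyadic_index h) \<le> log 2 (1/h)" "log 2 (1/h) < real (dyadic_index h) + 1"
    unfolding dyadic_index_def by linarith+
  have pow: "2 powr log 2 (1/h) = 1/h" using assms by simp
  have "(2::real)^dyadic_index h \<le> 1/h"
    using powr_mono[OF m(1), of 2] unfolding pow by (simp add: powr_realpow)
  then show "h \<le> 1/2^dyadic_index h" using assms by (simp add: field_simps)
  have "1/h < (2::real)^Suc (dyadic_index h)"
    using powr_less_mono[OF m(2), of 2] unfolding pow by (simp add: powr_realpow powr_add)
  then show "1/2^Suc (dyadic_index h) < h" using assms by (simp add: field_simps del: power_Suc)
qed

lemma eventually_dyadic_index_bounds:
  "\<forall>\<^sub>F h in at_right 0. 0 < h \<and> h \<le> 1/2^dyadic_index h \<and> 1/2^Suc (dyadic_index h) < h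
     \<and> real (dyadic_index h) \<le> log 2 (1/h) \<and> log 2 (1/h) < real (dyadic_index h) + 1"
proof -
  have "\<forall>\<^sub>F h in at_right 0. 0 < h \<and> h < (1::real)"
    unfolding eventually_at_right_field by (intro exI[of _ 1]) auto
  then show ?thesis
    by (rule eventually_mono) (use dyadic_index_bounds in \<open>auto simp del: power_Suc\<close>)
qed

lemma filterlim_log_inverse_at_right_0: "filterlim (\<lambda>h. log 2 (1/h)) at_top (at_right (0::real))"
proof -
  have ln: "filterlim (\<lambda>h. - ln h) at_top (at_right (0::real))"
    unfolding filterlim_uminus_at_top by (simp add: ln_at_0)
  have "filterlim (\<lambda>h. (1 / ln 2) * - ln h) at_top (at_right (0::real))"
    using filterlim_tendsto_pos_mult_at_top[OF tendsto_const[of "1 / ln 2"] _ ln] by simp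
  moreover have "\<forall>\<^sub>F h in at_right 0. (1 / ln 2) * - ln h \<le> log 2 (1/h)"
    using eventually_at_right_less by (rule eventually_mono) (simp add: log_def ln_div)
  ultimately show ?thesis by (rule filterlim_at_top_mono)
qed

lemma filterlim_dyadic_index: "filterlim (\<lambda>h. real (dyadic_index h)) at_top (at_right 0)"
proof -
  have "filterlim (\<lambda>h. -1 + log 2 (1/h)) at_top (at_right 0)"
    by (rule filterlim_tendsto_add_at_top[OF tendsto_const filterlim_log_inverse_at_right_0])
  then show ?thesis
    by (rule filterlim_at_top_mono) (use eventually_dyadic_index_bounds in \<open>rule eventually_mono, simp\<close>)
qed

definition log_slope :: "(real \<Rightarrow> real) \<Rightarrow> real \<Rightarrow> real \<Rightarrow> real" where
  "log_slope f x h = (f (x + h) - f x) / (h * log 2 (1 / \<bar>h\<bar>))"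

definition short_one_runs :: "real \<Rightarrow> bool" where
  "short_one_runs x \<longleftrightarrow>
     (\<forall>\<epsilon>>0. \<forall>\<^sub>F m in sequentially. \<forall>K. ones_run x K m \<longrightarrow> real m - real K \<le> \<epsilon> * real m)"

lemma takagi_ext_increment_error_tendsto:
  assumes "short_one_runs x"
  shows "((\<lambda>h. (takagi_ext (x + h) - takagi_ext x - h * digit_excess x (dyadic_index h))
            / (h * log 2 (1/h))) \<longlongrightarrow> 0) (at_right 0)"
proof (rule tendstoI)
  fix \<epsilon> :: real assume "0 < \<epsilon>"
  have m_seq: "filterlim dyadic_index sequentially (at_right 0)"
    using filterlim_dyadic_index by (simp add: filterlim_sequentially_iff_filterlim_real)
  have "\<forall>\<^sub>F h in at_right 0. \<forall>K. ones_run x K (dyadic_index h)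
      \<longrightarrow> real (dyadic_index h) - real K \<le> \<epsilon>/4 * real (dyadic_index h)"
    using assms \<open>0 < \<epsilon>\<close> unfolding short_one_runs_def
    by (intro eventually_compose_filterlim[OF _ m_seq]) (meson divide_pos_pos zero_less_numeral)
  moreover have "\<forall>\<^sub>F h in at_right 0. 16/\<epsilon> \<le> real (dyadic_index h)"
    using filterlim_dyadic_index unfolding filterlim_at_top by blast
  ultimately show "\<forall>\<^sub>F h in at_right 0.
      dist ((takagi_ext (x + h) - takagi_ext x - h * digit_excess x (dyadic_index h)) / (h * log 2 (1/h))) 0 < \<epsilon>"
    using eventually_dyadic_index_bounds
  proof eventually_elim
    case (elim h)
    define m where "m = real (dyadic_index h)"
    define E where "E = takagi_ext (x + h) - takagi_ext x - h * digit_excess x (dyadic_index h)"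
    have h: "0 < h" and mL: "m \<le> log 2 (1/h)" and m_ge: "16/\<epsilon> \<le> m"
      using elim by (auto simp: m_def)
    have m0: "0 < m" using m_ge \<open>0 < \<epsilon>\<close> by (smt (verit) divide_pos_pos)
    have "\<bar>E\<bar> \<le> 2 * h * (\<epsilon>/4 * m + 2)"
      unfolding E_def m_def using elim by (intro takagi_ext_increment_estimate) auto
    then have "\<bar>E\<bar> / (h * log 2 (1/h)) \<le> 2 * h * (\<epsilon>/4 * m + 2) / (h * m)"
      using h m0 mL \<open>0 < \<epsilon>\<close> by (intro frac_le) auto
    also have "\<dots> = \<epsilon>/2 + 4 / m"
      using h m0 by (simp add: field_simps)
    also have "4 / m \<le> \<epsilon>/4"
      using m_ge m0 \<open>0 < \<epsilon>\<close> by (simp add: field_simps)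
    finally have "\<bar>E\<bar> / (h * log 2 (1/h)) < \<epsilon>" using \<open>0 < \<epsilon>\<close> by linarith
    then show ?case
      using h m0 mL by (simp add: E_def abs_divide abs_mult)
  qed
qed

lemma takagi_ext_slope_tendsto:
  assumes excess: "(\<lambda>n. digit_excess x n / real n) \<longlonglongrightarrow> c" and runs: "short_one_runs x"
  shows "(log_slope takagi_ext x \<longlongrightarrow> c) (at_right 0)"
proof -
  define m where "m = dyadic_index"
  have m_seq: "filterlim m sequentially (at_right 0)"
    using filterlim_dyadic_index by (simp add: m_def filterlim_sequentially_iff_filterlim_real)
  have m_pos: "\<forall>\<^sub>F h in at_right 0. 1 \<le> real (m h)"
    using filterlim_dyadic_index unfolding filterlim_at_top m_def by blast
  note scale = eventually_dyadic_index_bounds[folded m_def]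
  have ratio: "((\<lambda>h. real (m h) / log 2 (1/h)) \<longlongrightarrow> 1) (at_right 0)"
  proof (rule tendsto_sandwich[of "\<lambda>h. 1 - 1 / log 2 (1/h)" _ _ "\<lambda>_. 1"])
    show "((\<lambda>h. 1 - 1 / log 2 (1/h)) \<longlongrightarrow> 1) (at_right 0)"
      using tendsto_diff[OF tendsto_const tendsto_inverse_0_at_top[OF filterlim_log_inverse_at_right_0], of 1]
      by (simp add: inverse_eq_divide)
    have "\<forall>\<^sub>F h in at_right 0. 1 - 1 / log 2 (1/h) \<le> real (m h) / log 2 (1/h)
        \<and> real (m h) / log 2 (1/h) \<le> 1"
      using eventually_conj[OF scale m_pos]
    proof (rule eventually_mono)
      fix h assume "(0 < h \<and> h \<le> 1/2^m h \<and> 1/2^Suc (m h) < h \<and> real (m h) \<le> log 2 (1/h)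
          \<and> log 2 (1/h) < real (m h) + 1) \<and> 1 \<le> real (m h)"
      then have "real (m h) \<le> log 2 (1/h)" "log 2 (1/h) < real (m h) + 1" "1 \<le> real (m h)" by auto
      moreover from this have L: "0 < log 2 (1/h)" by linarith
      ultimately have "(log 2 (1/h) - 1) / log 2 (1/h) \<le> real (m h) / log 2 (1/h)"
        by (intro divide_right_mono) auto
      moreover have "(log 2 (1/h) - 1) / log 2 (1/h) = 1 - 1 / log 2 (1/h)"
        using L by (simp add: diff_divide_distrib)
      ultimately show "1 - 1 / log 2 (1/h) \<le> real (m h) / log 2 (1/h) \<and> real (m h) / log 2 (1/h) \<le> 1"
        using L \<open>real (m h) \<le> log 2 (1/h)\<close> by simp
    qed
    then show "\<forall>\<^sub>F h in at_right 0. 1 - 1 / log 2 (1/h) \<le> real (m h) / log 2 (1/h)"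
      and "\<forall>\<^sub>F h in at_right 0. real (m h) / log 2 (1/h) \<le> 1"
      by (auto elim: eventually_mono)
  qed simp
  have "((\<lambda>h. digit_excess x (m h) / real (m h) * (real (m h) / log 2 (1/h))
      + (takagi_ext (x + h) - takagi_ext x - h * digit_excess x (m h)) / (h * log 2 (1/h)))
      \<longlongrightarrow> c * 1 + 0) (at_right 0)"
    using takagi_ext_increment_error_tendsto[OF runs, folded m_def]
    by (intro tendsto_intros filterlim_compose[OF excess m_seq] ratio)
  moreover have "\<forall>\<^sub>F h in at_right 0.
      digit_excess x (m h) / real (m h) * (real (m h) / log 2 (1/h))
        + (takagi_ext (x + h) - takagi_ext x - h * digit_excess x (m h)) / (h * log 2 (1/h))
        = log_slope takagi_ext x h"
    using eventually_conj[OF scale m_pos]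
    by (rule eventually_mono) (simp add: log_slope_def field_simps)
  ultimately show ?thesis by (simp add: Lim_transform_eventually)
qed

section \<open>Criteria for short runs of ones\<close>

lemma eventually_uniform_sublinear:
  fixes u :: "nat \<Rightarrow> real"
  assumes "(\<lambda>n. u n / real n) \<longlonglongrightarrow> 0" and "0 < \<epsilon>"
  shows "\<forall>\<^sub>F m in sequentially. \<forall>K\<le>m. \<bar>u K\<bar> \<le> \<epsilon> * real m"
proof -
  obtain N where N: "\<And>n. N \<le> n \<Longrightarrow> \<bar>u n / real n\<bar> < \<epsilon>"
    using assms unfolding LIMSEQ_iff by auto
  define C where "C = (\<Sum>n\<le>N. \<bar>u n\<bar>)"
  have small: "\<bar>u n\<bar> \<le> C" if "n \<le> N" for n
    unfolding C_def using that by (intro member_le_sum) auto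
  have "\<forall>\<^sub>F m in sequentially. C / \<epsilon> \<le> real m"
    using filterlim_real_sequentially unfolding filterlim_at_top by blast
  then show ?thesis
  proof (rule eventually_mono, intro allI impI)
    fix m K assume m: "C / \<epsilon> \<le> real m" and "K \<le> m"
    show "\<bar>u K\<bar> \<le> \<epsilon> * real m"
    proof (cases "N \<le> K \<and> 0 < K")
      case True
      then have "\<bar>u K\<bar> \<le> \<epsilon> * real K" using N[of K] by (simp add: abs_divide field_simps)
      also have "\<dots> \<le> \<epsilon> * real m" using \<open>K \<le> m\<close> assms(2) by simp
      finally show ?thesis .
    next
      case False
      then have "\<bar>u K\<bar> \<le> C" by (intro small) auto
      also have "C \<le> \<epsilon> * real m" using m assms(2) by (simp add: field_simps)
      finally show ?thesis .
    qed
  qed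
qed

lemma sum_bdigit_ones_run:
  assumes "ones_run x K m" "K \<le> m"
  shows "(\<Sum>k=1..m. real (bdigit x k)) = (\<Sum>k=1..K. real (bdigit x k)) + (real m - real K)"
  using assms
proof (induction m)
  case (Suc m)
  show ?case
  proof (cases "K = Suc m")
    case False
    then have "K \<le> m" and "ones_run x K m" and "bdigit x (Suc m) = 1"
      using Suc.prems by (auto simp: ones_run_def)
    then show ?thesis using Suc.IH by (simp add: atLeastAtMostSuc_conv)
  qed simp
qed simp

lemma short_one_runs_of_density_less_1:
  assumes d1: "(\<lambda>n. (\<Sum>k=1..n. real (bdigit x k)) / real n) \<longlonglongrightarrow> d1" and "d1 < 1"
  shows "short_one_runs x"
  unfolding short_one_runs_def
proof (intro allI impI)
  fix \<epsilon> :: real assume "0 < \<epsilon>"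
  define u where "u n = (\<Sum>k=1..n. real (bdigit x k)) - d1 * real n" for n
  have "(\<lambda>n. (\<Sum>k=1..n. real (bdigit x k)) / real n - d1) \<longlonglongrightarrow> 0"
    using tendsto_diff[OF d1 tendsto_const[of d1]] by simp
  moreover have "\<forall>\<^sub>F n in sequentially. (\<Sum>k=1..n. real (bdigit x k)) / real n - d1 = u n / real n"
    using eventually_gt_at_top[of 0] by (rule eventually_mono) (simp add: u_def field_simps)
  ultimately have "(\<lambda>n. u n / real n) \<longlonglongrightarrow> 0" by (rule Lim_transform_eventually)
  from eventually_uniform_sublinear[OF this, of "(1 - d1) * \<epsilon> / 2"]
  have "\<forall>\<^sub>F m in sequentially. \<forall>K\<le>m. \<bar>u K\<bar> \<le> (1 - d1) * \<epsilon> / 2 * real m"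
    using \<open>d1 < 1\<close> \<open>0 < \<epsilon>\<close> by simp
  then show "\<forall>\<^sub>F m in sequentially. \<forall>K. ones_run x K m \<longrightarrow> real m - real K \<le> \<epsilon> * real m"
  proof (rule eventually_mono, intro allI impI)
    fix m K assume u: "\<forall>K\<le>m. \<bar>u K\<bar> \<le> (1 - d1) * \<epsilon> / 2 * real m" and run: "ones_run x K m"
    show "real m - real K \<le> \<epsilon> * real m"
    proof (cases "K \<le> m")
      case True
      have "(1 - d1) * (real m - real K) = u m - u K"
        using sum_bdigit_ones_run[OF run True] by (simp add: u_def algebra_simps)
      also have "\<dots> \<le> (1 - d1) * (\<epsilon> * real m)"
      proof -
        have "\<bar>u m\<bar> \<le> (1 - d1) * \<epsilon> / 2 * real m" "\<bar>u K\<bar> \<le> (1 - d1) * \<epsilon> / 2 * real m"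
          using u True by auto
        moreover have "(1 - d1) * (\<epsilon> * real m) = 2 * ((1 - d1) * \<epsilon> / 2 * real m)" by simp
        ultimately show ?thesis unfolding abs_le_iff by linarith
      qed
      finally show ?thesis using \<open>d1 < 1\<close> by simp
    next
      case False
      then have "real m - real K \<le> 0" by simp
      moreover have "0 \<le> \<epsilon> * real m" using \<open>0 < \<epsilon>\<close> by simp
      ultimately show ?thesis by linarith
    qed
  qed
qed

abbreviation zero_digit_pos :: "real \<Rightarrow> nat \<Rightarrow> nat" where
  "zero_digit_pos x \<equiv> enumerate (zero_digits x)"

lemma strict_mono_zero_digit_pos: "strict_mono (zero_digit_pos x)"
  by (rule strict_mono_enumerate[OF infinite_zero_digits])

lemma zero_digit_pos_props:
  "bdigit x (zero_digit_pos x n) = 0" "1 \<le> zero_digit_pos x n" "n \<le> zero_digit_pos x n"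
  using enumerate_in_set[OF infinite_zero_digits, of x n] le_enumerate[OF infinite_zero_digits]
  by (auto simp: zero_digits_def)

lemma ones_run_between_zero_digit_pos:
  "ones_run x (zero_digit_pos x j) (zero_digit_pos x (Suc j) - 1)"
  unfolding ones_run_def
proof (intro allI impI, rule ccontr)
  fix i assume i: "zero_digit_pos x j < i \<and> i \<le> zero_digit_pos x (Suc j) - 1" and "bdigit x i \<noteq> 1"
  then have "i \<in> zero_digits x"
    using bdigit_le_1[of x i] zero_digit_pos_props(2)[of x j] by (auto simp: zero_digits_def)
  then obtain n where n: "zero_digit_pos x n = i"
    using enumerate_Ex[OF infinite_zero_digits] by blast
  have "i < zero_digit_pos x (Suc j)" using i zero_digit_pos_props(2)[of x "Suc j"] by linarith
  then have "zero_digit_pos x j < zero_digit_pos x n" "zero_digit_pos x n < zero_digit_pos x (Suc j)"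
    using i n by simp_all
  then have "j < n" "n < Suc j" using strict_mono_less[OF strict_mono_zero_digit_pos] by blast+
  then show False by simp
qed

lemma ones_run_below_zero_digit_pos:
  "ones_run x K m \<Longrightarrow> K < zero_digit_pos x j \<Longrightarrow> m < zero_digit_pos x j"
  using zero_digit_pos_props(1)[of x j] by (force simp: ones_run_def)

lemma strict_mono_bracket:
  fixes f :: "nat \<Rightarrow> nat"
  assumes "strict_mono f" "f 0 \<le> K"
  shows "\<exists>j. f j \<le> K \<and> K < f (Suc j)"
proof -
  define n where "n = (LEAST n. K < f n)"
  have "K < f (Suc K)" using seq_suble[OF assms(1), of "Suc K"] by simp
  then have "K < f n" unfolding n_def by (rule LeastI)
  then obtain j where "n = Suc j" using assms(2) by (cases n) auto
  moreover have "\<not> K < f j" using not_less_Least[of j "\<lambda>n. K < f n"] unfolding n_def[symmetric] \<open>n = Suc j\<close> by simp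
  ultimately show ?thesis using \<open>K < f n\<close> by (intro exI[of _ j]) simp
qed

lemma short_one_runs_of_zero_gap_ratio:
  assumes ratio: "(\<lambda>n. real (zero_digit_pos x (Suc n)) / real (zero_digit_pos x n)) \<longlonglongrightarrow> 1"
  shows "short_one_runs x"
  unfolding short_one_runs_def
proof (intro allI impI)
  fix \<epsilon> :: real assume "0 < \<epsilon>"
  obtain J where J0: "\<forall>j\<ge>J. norm (real (zero_digit_pos x (Suc j)) / real (zero_digit_pos x j) - 1) < \<epsilon>"
    using LIMSEQ_D[OF ratio \<open>0 < \<epsilon>\<close>] by blast
  define b where "b = zero_digit_pos x"
  have J: "\<And>j. J \<le> j \<Longrightarrow> \<bar>real (b (Suc j)) / real (b j) - 1\<bar> < \<epsilon>"
    using J0 unfolding b_def by simp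
  show "\<forall>\<^sub>F m in sequentially. \<forall>K. ones_run x K m \<longrightarrow> real m - real K \<le> \<epsilon> * real m"
    using eventually_gt_at_top[of "b J"]
  proof (rule eventually_mono, intro allI impI)
    fix m K assume m: "b J < m" and run: "ones_run x K m"
    show "real m - real K \<le> \<epsilon> * real m"
    proof (cases "K < m")
      case True
      have mono: "strict_mono b" unfolding b_def by (rule strict_mono_zero_digit_pos)
      have "b 0 \<le> b J" using mono by (simp add: strict_mono_less_eq)
      then have "b 0 \<le> K" using ones_run_below_zero_digit_pos[OF run, of 0] m unfolding b_def by linarith
      then obtain j where j: "b j \<le> K" "K < b (Suc j)" using strict_mono_bracket[OF mono] by blast
      have m_lt: "m < b (Suc j)" using ones_run_below_zero_digit_pos[OF run j(2)[unfolded b_def]] by (simp add: b_def)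
      have "J \<le> j"
      proof (rule ccontr)
        assume "\<not> J \<le> j"
        then have "b (Suc j) \<le> b J" using mono by (simp add: strict_mono_less_eq)
        then show False using m m_lt by simp
      qed
      then have "real (b (Suc j)) / real (b j) < 1 + \<epsilon>" using J[of j] by linarith
      then have "real (b (Suc j)) < real (b j) + \<epsilon> * real (b j)"
        using zero_digit_pos_props(2)[of x j] by (simp add: b_def divide_less_eq distrib_right)
      moreover have "real m < real (b (Suc j))" "real (b j) \<le> real K" "real (b j) \<le> real m"
        using m_lt j(1) True by simp_all
      moreover have "\<epsilon> * real (b j) \<le> \<epsilon> * real m"
        using \<open>real (b j) \<le> real m\<close> \<open>0 < \<epsilon>\<close> by simp
      ultimately show ?thesis by linarith
    next
      case False
      then have "real m - real K \<le> 0" by simp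
      moreover have "0 \<le> \<epsilon> * real m" using \<open>0 < \<epsilon>\<close> by simp
      ultimately show ?thesis by linarith
    qed
  qed
qed

section \<open>Slopes at rounded-up points\<close>

lemma floor_pow2_div: "j \<le> B \<Longrightarrow> \<lfloor>2^j * (y::real)\<rfloor> = \<lfloor>2^B * y\<rfloor> div 2^(B - j)"
proof -
  assume "j \<le> B"
  then have "(2::real)^B = 2^j * 2^(B - j)" by (simp flip: power_add)
  then have "\<lfloor>2^j * y\<rfloor> = \<lfloor>(2^B * y) / real_of_int (2^(B - j))\<rfloor>" by simp
  also have "\<dots> = \<lfloor>2^B * y\<rfloor> div 2^(B - j)" by (rule floor_divide_real_eq_div) simp
  finally show ?thesis .
qed

lemma takagi_ext_dyadic_increment:
  assumes "B < k"
  shows "takagi_ext (of_int N / 2^B + 1/2^k) - takagi_ext (of_int N / 2^B)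
           = (digit_excess (of_int N / 2^B) B + real k - real B) / 2^k"
proof -
  define r where "r = of_int N / (2::real)^B"
  define \<eta> where "\<eta> = 1 / (2::real)^k"
  have shift: "2^B * (r + \<eta>) = 1/2^(k - B) + of_int N"
    unfolding r_def \<eta>_def using assms by (simp add: field_simps power_diff)
  have "\<lfloor>2^B * (r + \<eta>)\<rfloor> = N" "\<lfloor>2^B * r\<rfloor> = N"
    unfolding shift using assms by (simp_all add: r_def floor_eq_iff)
  then have same: "\<lfloor>2^Suc n * r\<rfloor> = \<lfloor>2^Suc n * (r + \<eta>)\<rfloor>" if "n < B" for n
    using floor_pow2_div[of "Suc n" B r] floor_pow2_div[of "Suc n" B "r + \<eta>"] that by simp
  have "takagi_ext (r + \<eta>) - takagi_ext r
      = (r + \<eta> - r) * digit_excess r B + (takagi_ext (2^B * (r + \<eta>)) - takagi_ext (2^B * r)) / 2^B"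
    by (rule takagi_ext_increment_exact) (use same in auto)
  also have "takagi_ext (2^B * (r + \<eta>)) - takagi_ext (2^B * r) = real (k - B) / 2^(k - B)"
    unfolding shift by (simp add: r_def takagi_ext_add_of_int takagi_ext_of_int takagi_ext_inverse_pow2)
  also have "(r + \<eta> - r) * digit_excess r B + real (k - B) / 2^(k - B) / 2^B
      = (digit_excess r B + real k - real B) / 2^k"
    unfolding \<eta>_def using assms by (simp add: power_diff of_nat_diff field_simps)
  finally show ?thesis unfolding r_def \<eta>_def .
qed

lemma even_succ_div_pow2:
  fixes F :: int
  assumes "even F" "1 \<le> a"
  shows "(F + 1) div 2^a = F div 2^a"
proof -
  have "(2::int)^a = 2 * 2^(a - 1)" using assms(2) by (simp flip: power_Suc)
  moreover have "(F + 1) div 2 = F div 2" using assms(1) by presburger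
  ultimately show ?thesis by (simp add: zdiv_zmult2_eq)
qed

text \<open>Rounding \<open>x\<close> up at a zero digit \<open>B\<close> turns that digit into a one and keeps the digits before it.\<close>

lemma digit_excess_round_up:
  assumes "bdigit x B = 0" "1 \<le> B"
  shows "digit_excess (of_int (\<lfloor>2^B * x\<rfloor> + 1) / 2^B) B = digit_excess x B - 2"
proof -
  define F where "F = \<lfloor>2^B * x\<rfloor>"
  define r where "r = of_int (F + 1) / (2::real)^B"
  have "F mod 2 \<le> 0" using assms(1) by (simp add: bdigit_def F_def)
  then have "even F" using pos_mod_sign[of 2 F] by (simp add: even_iff_mod_2_eq_zero)
  have floor_r: "\<lfloor>2^B * r\<rfloor> = F + 1" unfolding r_def by simp
  have same: "bdigit r (Suc n) = bdigit x (Suc n)" if "Suc n < B" for n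
  proof -
    have "\<lfloor>2^Suc n * r\<rfloor> = (F + 1) div 2^(B - Suc n)" using floor_pow2_div[of "Suc n" B r] floor_r that by simp
    also have "\<dots> = F div 2^(B - Suc n)" using \<open>even F\<close> that by (intro even_succ_div_pow2) auto
    also have "\<dots> = \<lfloor>2^Suc n * x\<rfloor>" using floor_pow2_div[of "Suc n" B x] that unfolding F_def by simp
    finally show ?thesis unfolding bdigit_def by simp
  qed
  have "(F + 1) mod 2 = 1" using \<open>even F\<close> by presburger
  then have last: "bdigit r B = 1" unfolding bdigit_def floor_r by simp
  obtain B' where B': "B = Suc B'" using assms(2) by (cases B) auto
  have "digit_excess r B' = digit_excess x B'"
    unfolding digit_excess_def using same B' by (intro sum.cong) auto
  then show ?thesis
    using last assms(1) unfolding r_def F_def B' by (simp add: digit_excess_def)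
qed

lemma round_up_at_zero_digit:
  assumes d0: "bdigit x B = 0" and B: "1 \<le> B" "B < B2" "B < k" and run: "ones_run x B (B2 - 1)"
  defines "r \<equiv> of_int (\<lfloor>2^B * x\<rfloor> + 1) / 2^B"
  shows "0 < r - x" "r - x \<le> 2/2^B2"
    and "takagi_ext (r + 1/2^k) - takagi_ext r = (digit_excess x B - 2 + real k - real B) / 2^k"
    and "\<bar>takagi_ext r - takagi_ext x\<bar> \<le> 2 * real B2 / 2^B2"
proof -
  obtain c where "B2 = Suc c" using B by (cases B2) auto
  then have half: "1/2^(B2 - 1) = (2::real)/2^B2" by simp
  have dist: "r - x = (1 - frac (2^B * x)) / 2^B"
    unfolding r_def frac_def by (simp add: field_simps)
  then show pos: "0 < r - x" using frac_lt_1[of "2^B * x"] by simp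
  have "ones_run x B (B + (B2 - 1 - B))" using run B by simp
  then have "1 - frac (2^B * x) \<le> 1/2^(B2 - 1 - B)" unfolding ones_run_iff_frac by simp
  then have "r - x \<le> 1/2^(B2 - 1 - B) / 2^B" unfolding dist by (rule divide_right_mono) simp
  also have "\<dots> = 2/2^B2"
    using B half by (simp flip: power_add)
  finally show close: "r - x \<le> 2/2^B2" .
  show "takagi_ext (r + 1/2^k) - takagi_ext r = (digit_excess x B - 2 + real k - real B) / 2^k"
    using takagi_ext_dyadic_increment[OF B(3), of "\<lfloor>2^B * x\<rfloor> + 1"] digit_excess_round_up[OF d0 B(1)]
    unfolding r_def by simp
  have "\<bar>takagi_ext r - takagi_ext x\<bar> \<le> real (B2 - 1) * \<bar>r - x\<bar> + 1/2^(B2 - 1)"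
    by (rule takagi_ext_modulus)
  also have "\<dots> \<le> real (B2 - 1) * (2/2^B2) + 2/2^B2"
    using pos close half by (intro add_mono mult_left_mono) auto
  also have "\<dots> = 2 * real B2 / 2^B2"
    using B by (simp add: of_nat_diff field_simps)
  finally show "\<bar>takagi_ext r - takagi_ext x\<bar> \<le> 2 * real B2 / 2^B2" .
qed

lemma slope_tendsto_at_dyadic_scale:
  fixes h N :: "nat \<Rightarrow> real" and k :: "nat \<Rightarrow> nat"
  assumes k: "filterlim (\<lambda>n. real (k n)) at_top sequentially"
    and h: "(\<lambda>n. h n * 2^k n) \<longlonglongrightarrow> 1"
    and N: "(\<lambda>n. N n * 2^k n / real (k n)) \<longlonglongrightarrow> l"
  shows "(\<lambda>n. N n / (h n * log 2 (1 / \<bar>h n\<bar>))) \<longlonglongrightarrow> l"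
proof -
  have "(\<lambda>n. log 2 (h n * 2^k n)) \<longlonglongrightarrow> log 2 1"
    by (intro tendsto_log h) auto
  moreover have "(\<lambda>n. 1 / real (k n)) \<longlonglongrightarrow> 0"
    using tendsto_inverse_0_at_top[OF k] by (simp add: inverse_eq_divide)
  ultimately have "(\<lambda>n. (N n * 2^k n / real (k n))
      / ((h n * 2^k n) * (1 - log 2 (h n * 2^k n) * (1 / real (k n))))) \<longlonglongrightarrow> l / (1 * (1 - 0 * 0))"
    by (intro tendsto_intros N h) simp_all
  then have lim: "(\<lambda>n. (N n * 2^k n / real (k n))
      / ((h n * 2^k n) * (1 - log 2 (h n * 2^k n) * (1 / real (k n))))) \<longlonglongrightarrow> l" by simp
  have "\<forall>\<^sub>F n in sequentially. 0 < h n * 2^k n"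
    using h by (rule order_tendstoD) simp
  moreover have "\<forall>\<^sub>F n in sequentially. 1 \<le> real (k n)"
    using k unfolding filterlim_at_top by blast
  ultimately have "\<forall>\<^sub>F n in sequentially. (N n * 2^k n / real (k n))
      / ((h n * 2^k n) * (1 - log 2 (h n * 2^k n) * (1 / real (k n)))) = N n / (h n * log 2 (1 / \<bar>h n\<bar>))"
    by eventually_elim (auto simp: zero_less_mult_iff log_mult log_divide field_simps)
  with lim show ?thesis by (rule Lim_transform_eventually)
qed
lemma scaled_index_asymptotics:
  fixes B B2 k :: "nat \<Rightarrow> nat"
  assumes B: "filterlim (\<lambda>n. real (B n)) at_top sequentially" "\<And>n. 1 \<le> B n"
    and B2: "\<And>n. (1 + \<delta>) * real (B n) \<le> real (B2 n)" and \<theta>: "0 < \<theta>" "\<theta> < \<delta>"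
    and k: "\<And>n. (1 + \<theta>) * real (B n) \<le> real (k n)" "\<And>n. real (k n) < (1 + \<theta>) * real (B n) + 1"
  shows "B n < k n"
    and "(\<lambda>n. real (k n) / real (B n)) \<longlonglongrightarrow> 1 + \<theta>"
    and "filterlim (\<lambda>n. real (B2 n) - real (k n)) at_top sequentially"
proof -
  have "real (B n) < (1 + \<theta>) * real (B n)" using \<theta> B(2)[of n] by simp
  then show "B n < k n" using k(1)[of n] by linarith
  have "(\<lambda>n. 1 / real (B n)) \<longlonglongrightarrow> 0"
    using tendsto_inverse_0_at_top[OF B(1)] by (simp add: inverse_eq_divide)
  then have upper: "(\<lambda>n. (1 + \<theta>) + 1 / real (B n)) \<longlonglongrightarrow> 1 + \<theta>"
    using tendsto_add[OF tendsto_const, of _ 0 _ "1 + \<theta>"] by simp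
  show "(\<lambda>n. real (k n) / real (B n)) \<longlonglongrightarrow> 1 + \<theta>"
  proof (rule tendsto_sandwich[OF _ _ tendsto_const upper])
    have "1 + \<theta> \<le> real (k n) / real (B n)" for n
      using k(1)[of n] B(2)[of n] by (simp add: field_simps)
    then show "\<forall>\<^sub>F n in sequentially. 1 + \<theta> \<le> real (k n) / real (B n)" by simp
    have "real (k n) / real (B n) \<le> (1 + \<theta>) + 1 / real (B n)" for n
      using k(2)[of n] B(2)[of n] by (simp add: field_simps)
    then show "\<forall>\<^sub>F n in sequentially. real (k n) / real (B n) \<le> (1 + \<theta>) + 1 / real (B n)" by simp
  qed
  have "filterlim (\<lambda>n. -1 + (\<delta> - \<theta>) * real (B n)) at_top sequentially"
    using \<theta> by (intro filterlim_tendsto_add_at_top[OF tendsto_const]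
        filterlim_tendsto_pos_mult_at_top[OF tendsto_const _ B(1)]) simp
  moreover have "-1 + (\<delta> - \<theta>) * real (B n) \<le> real (B2 n) - real (k n)" for n
    using k(2)[of n] B2[of n] by (simp add: algebra_simps)
  ultimately show "filterlim (\<lambda>n. real (B2 n) - real (k n)) at_top sequentially"
    by (blast intro: filterlim_at_top_mono always_eventually)
qed

lemma real_le_two_power: "real g \<le> (2::real)^g"
proof -
  have "real g \<le> real (2^g)" using less_exp[of g] by linarith
  then show ?thesis by simp
qed

lemma dyadic_tail_ratio_le:
  fixes k g :: nat
  assumes "1 \<le> g" "1 \<le> k"
  shows "2 * real (k + g) / 2^(k + g) * 2^k / real k \<le> 2 / real g + 2 / real k"
proof -
  have "2 * real (k + g) / 2^(k + g) * 2^k / real k = 2/2^g + 2 * real g / (2^g * real k)"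
    using assms by (simp add: power_add field_simps)
  moreover have "2/(2::real)^g \<le> 2/real g"
    using assms real_le_two_power[of g] by (intro divide_left_mono) auto
  moreover have "2 * real g / (2^g * real k) \<le> 2 * 2^g / (2^g * real k)"
    using assms real_le_two_power[of g] by (intro divide_right_mono) auto
  ultimately show ?thesis by simp
qed

lemma tendsto_zero_across_dyadic_gap:
  fixes k B2 :: "nat \<Rightarrow> nat" and d e :: "nat \<Rightarrow> real"
  assumes gap: "filterlim (\<lambda>n. real (B2 n) - real (k n)) at_top sequentially"
    and k: "filterlim (\<lambda>n. real (k n)) at_top sequentially"
    and d: "\<And>n. 0 < d n" "\<And>n. d n \<le> 2 / 2^B2 n"
    and e: "\<And>n. \<bar>e n\<bar> \<le> 2 * real (B2 n) / 2^B2 n"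
  shows "(\<lambda>n. d n * 2^k n) \<longlonglongrightarrow> 0" and "(\<lambda>n. e n * 2^k n / real (k n)) \<longlonglongrightarrow> 0"
proof -
  define g where "g n = B2 n - k n" for n
  have "\<forall>\<^sub>F n in sequentially. 1 \<le> real (B2 n) - real (k n)"
    using gap unfolding filterlim_at_top by blast
  moreover have "\<forall>\<^sub>F n in sequentially. 1 \<le> real (k n)"
    using k unfolding filterlim_at_top by blast
  ultimately have ev: "\<forall>\<^sub>F n in sequentially. 1 \<le> g n \<and> 1 \<le> k n \<and> B2 n = k n + g n"
    by eventually_elim (auto simp: g_def)
  have "filterlim (\<lambda>n. real (g n)) at_top sequentially"
    using gap ev by (elim filterlim_at_top_mono eventually_mono) (simp add: of_nat_diff)
  then have inv_g: "(\<lambda>n. 1 / real (g n)) \<longlonglongrightarrow> 0"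
    using tendsto_inverse_0_at_top by (simp add: inverse_eq_divide)
  have inv_k: "(\<lambda>n. 1 / real (k n)) \<longlonglongrightarrow> 0"
    using tendsto_inverse_0_at_top[OF k] by (simp add: inverse_eq_divide)
  show "(\<lambda>n. d n * 2^k n) \<longlonglongrightarrow> 0"
  proof (rule Lim_null_comparison)
    show "\<forall>\<^sub>F n in sequentially. norm (d n * 2^k n) \<le> 2 * (1 / real (g n))"
      using ev
    proof (rule eventually_mono)
      fix n assume n: "1 \<le> g n \<and> 1 \<le> k n \<and> B2 n = k n + g n"
      have "d n * 2^k n \<le> 2/2^B2 n * 2^k n" using d(2)[of n] by (rule mult_right_mono) simp
      also have "\<dots> = 2/2^g n" using n by (simp add: power_add)
      also have "\<dots> \<le> 2 * (1 / real (g n))" using n real_le_two_power[of "g n"] by (simp add: frac_le)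
      finally show "norm (d n * 2^k n) \<le> 2 * (1 / real (g n))" using d(1)[of n] by simp
    qed
  qed (use tendsto_mult_right_zero[OF inv_g] in simp)
  show "(\<lambda>n. e n * 2^k n / real (k n)) \<longlonglongrightarrow> 0"
  proof (rule Lim_null_comparison)
    show "\<forall>\<^sub>F n in sequentially. norm (e n * 2^k n / real (k n)) \<le> 2 / real (g n) + 2 / real (k n)"
      using ev
    proof (rule eventually_mono)
      fix n assume n: "1 \<le> g n \<and> 1 \<le> k n \<and> B2 n = k n + g n"
      have "norm (e n * 2^k n / real (k n)) = \<bar>e n\<bar> * 2^k n / real (k n)"
        by (simp add: abs_mult)
      also have "\<dots> \<le> 2 * real (B2 n) / 2^B2 n * 2^k n / real (k n)"
        using e[of n] by (intro divide_right_mono mult_right_mono) auto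
      also have "\<dots> \<le> 2 / real (g n) + 2 / real (k n)"
        using dyadic_tail_ratio_le[of "g n" "k n"] n by simp
      finally show "norm (e n * 2^k n / real (k n)) \<le> 2 / real (g n) + 2 / real (k n)" .
    qed
  qed (use tendsto_add[OF tendsto_mult_right_zero[OF inv_g] tendsto_mult_right_zero[OF inv_k]] in simp)
qed

lemma round_up_excess_tendsto:
  fixes B k :: "nat \<Rightarrow> nat" and D :: "nat \<Rightarrow> real"
  assumes D: "(\<lambda>n. D n / real (B n)) \<longlonglongrightarrow> -1" and kB: "(\<lambda>n. real (k n) / real (B n)) \<longlonglongrightarrow> 1 + \<theta>"
    and k: "filterlim (\<lambda>n. real (k n)) at_top sequentially"
    and "0 < \<theta>" "\<And>n. 1 \<le> B n" "\<And>n. B n < k n"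
  shows "(\<lambda>n. (D n - 2 + real (k n) - real (B n)) / real (k n)) \<longlonglongrightarrow> (\<theta> - 1) / (1 + \<theta>)"
proof -
  have "(\<lambda>n. inverse (real (k n) / real (B n))) \<longlonglongrightarrow> inverse (1 + \<theta>)"
    using kB \<open>0 < \<theta>\<close> by (intro tendsto_inverse) auto
  then have Bk: "(\<lambda>n. real (B n) / real (k n)) \<longlonglongrightarrow> 1 / (1 + \<theta>)"
    by (simp add: inverse_eq_divide)
  have inv_k: "(\<lambda>n. 1 / real (k n)) \<longlonglongrightarrow> 0"
    using tendsto_inverse_0_at_top[OF k] by (simp add: inverse_eq_divide)
  have "(\<lambda>n. D n / real (B n) * (real (B n) / real (k n)) - 2 * (1 / real (k n))
      + 1 - real (B n) / real (k n)) \<longlonglongrightarrow> -1 * (1 / (1 + \<theta>)) - 2 * 0 + 1 - 1 / (1 + \<theta>)"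
    by (intro tendsto_intros D Bk inv_k)
  moreover have "-1 * (1 / (1 + \<theta>)) - 2 * 0 + 1 - 1 / (1 + \<theta>) = (\<theta> - 1) / (1 + \<theta>)"
  proof -
    have "(\<theta> - 1) / (1 + \<theta>) = ((1 + \<theta>) - 2) / (1 + \<theta>)" by simp
    also have "\<dots> = (1 + \<theta>) / (1 + \<theta>) - 2 / (1 + \<theta>)" by (rule diff_divide_distrib)
    also have "\<dots> = 1 - 2 / (1 + \<theta>)" using \<open>0 < \<theta>\<close> by simp
    finally show ?thesis by simp
  qed
  moreover have "D n / real (B n) * (real (B n) / real (k n)) - 2 * (1 / real (k n)) + 1 - real (B n) / real (k n)
      = (D n - 2 + real (k n) - real (B n)) / real (k n)" for n
    using assms(5,6)[of n] by (simp add: field_simps)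
  ultimately show ?thesis by simp
qed

text \<open>The increments are \<open>h = (r - x) + 2^-k\<close>, where \<open>r\<close> rounds \<open>x\<close> up at the zero digit
  \<open>B = b(\<sigma> n)\<close>, which is followed by ones up to \<open>B2 = b(\<sigma> n + 1) \<ge> (1 + \<delta>) B\<close>, and
  \<open>k = \<lceil>(1 + \<theta>) B\<rceil>\<close>. As \<open>r - x \<le> 2^(1 - B2)\<close> is negligible against \<open>2^-k\<close>, the slope is
  essentially \<open>(digit_excess x B - 2 + k - B) / k \<longrightarrow> (\<theta> - 1) / (1 + \<theta>)\<close>.\<close>

lemma takagi_ext_slope_along_round_ups:
  fixes \<sigma> :: "nat \<Rightarrow> nat"
  assumes excess: "(\<lambda>n. digit_excess x n / real n) \<longlonglongrightarrow> -1"
    and \<sigma>: "strict_mono \<sigma>"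
    and gap: "\<And>n. (1 + \<delta>) * real (zero_digit_pos x (\<sigma> n)) \<le> real (zero_digit_pos x (Suc (\<sigma> n)))"
    and \<theta>: "0 < \<theta>" "\<theta> < \<delta>"
  obtains h where "\<And>n. 0 < h n" "h \<longlonglongrightarrow> 0"
    "(\<lambda>n. log_slope takagi_ext x (h n)) \<longlonglongrightarrow> (\<theta> - 1) / (1 + \<theta>)"
proof -
  define B where "B n = zero_digit_pos x (\<sigma> n)" for n
  define B2 where "B2 n = zero_digit_pos x (Suc (\<sigma> n))" for n
  define k where "k n = nat \<lceil>(1 + \<theta>) * real (B n)\<rceil>" for n
  define r :: "nat \<Rightarrow> real" where "r n = of_int (\<lfloor>2^B n * x\<rfloor> + 1) / 2^B n" for n
  define h where "h n = r n - x + 1/2^k n" for n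
  have B1: "1 \<le> B n" for n unfolding B_def by (rule zero_digit_pos_props)
  have "n \<le> B n" for n
    using seq_suble[OF \<sigma>, of n] zero_digit_pos_props(3)[of "\<sigma> n" x] unfolding B_def by linarith
  then have B_inf: "filterlim (\<lambda>n. real (B n)) at_top sequentially"
    by (intro filterlim_at_top_mono[OF filterlim_real_sequentially] always_eventually) simp
  have "(1 + \<theta>) * real (B n) \<le> real (k n)" "real (k n) < (1 + \<theta>) * real (B n) + 1" for n
  proof -
    have "real (k n) = of_int \<lceil>(1 + \<theta>) * real (B n)\<rceil>" unfolding k_def using \<theta> by simp
    then show "(1 + \<theta>) * real (B n) \<le> real (k n)" "real (k n) < (1 + \<theta>) * real (B n) + 1"
      using ceiling_correct[of "(1 + \<theta>) * real (B n)"] by auto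
  qed
  note index = scaled_index_asymptotics[OF B_inf B1 gap[folded B_def B2_def] \<theta> this]
  note Bk = index(1)
  have k_inf: "filterlim (\<lambda>n. real (k n)) at_top sequentially"
    using Bk by (intro filterlim_at_top_mono[OF B_inf] always_eventually) (simp add: less_imp_le)
  have BB2: "B n < B2 n" for n
    unfolding B_def B2_def using strict_mono_zero_digit_pos by (simp add: strict_mono_less)
  have round: "0 < r n - x" "r n - x \<le> 2/2^B2 n"
    "takagi_ext (r n + 1/2^k n) - takagi_ext (r n) = (digit_excess x (B n) - 2 + real (k n) - real (B n)) / 2^k n"
    "\<bar>takagi_ext (r n) - takagi_ext x\<bar> \<le> 2 * real (B2 n) / 2^B2 n" for n
  proof -
    have "bdigit x (B n) = 0" "ones_run x (B n) (B2 n - 1)"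
      unfolding B_def B2_def by (rule zero_digit_pos_props ones_run_between_zero_digit_pos)+
    note R = round_up_at_zero_digit[OF this(1) B1 BB2 Bk this(2)]
    show "0 < r n - x" "r n - x \<le> 2/2^B2 n"
      "takagi_ext (r n + 1/2^k n) - takagi_ext (r n) = (digit_excess x (B n) - 2 + real (k n) - real (B n)) / 2^k n"
      "\<bar>takagi_ext (r n) - takagi_ext x\<bar> \<le> 2 * real (B2 n) / 2^B2 n"
      unfolding r_def by (fact R)+
  qed
  note gap_limits = tendsto_zero_across_dyadic_gap[OF index(3) k_inf round(1,2,4)]
  from tendsto_add[OF gap_limits(1) tendsto_const[of 1]]
  have scale: "(\<lambda>n. h n * 2^k n) \<longlonglongrightarrow> 1"
    by (simp add: h_def algebra_simps)
  have "(\<lambda>n. digit_excess x (B n) / real (B n)) \<longlonglongrightarrow> -1"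
    using LIMSEQ_subseq_LIMSEQ[OF excess strict_mono_o[OF strict_mono_zero_digit_pos \<sigma>]]
    unfolding B_def comp_def .
  from round_up_excess_tendsto[OF this index(2) k_inf \<theta>(1) B1 Bk]
  have near: "(\<lambda>n. (takagi_ext (r n + 1/2^k n) - takagi_ext (r n)) * 2^k n / real (k n))
      \<longlonglongrightarrow> (\<theta> - 1) / (1 + \<theta>)"
    by (simp add: round(3))
  have "(a - c) * t / q = (a - b) * t / q + (b - c) * t / q" for a b c t q :: real
    by (simp add: add_divide_distrib[symmetric] algebra_simps)
  moreover have "x + h n = r n + 1/2^k n" for n by (simp add: h_def)
  ultimately have "(\<lambda>n. (takagi_ext (x + h n) - takagi_ext x) * 2^k n / real (k n)) \<longlonglongrightarrow> (\<theta> - 1) / (1 + \<theta>)"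
    using tendsto_add[OF near gap_limits(2)] by simp
  then have slope: "(\<lambda>n. log_slope takagi_ext x (h n)) \<longlonglongrightarrow> (\<theta> - 1) / (1 + \<theta>)"
    unfolding log_slope_def by (rule slope_tendsto_at_dyadic_scale[OF k_inf scale])
  have "1 / (2::real)^k n \<le> 1 / real (k n)" for n
    using real_le_two_power[of "k n"] Bk[of n] by (intro divide_left_mono) auto
  moreover have inv_k: "(\<lambda>n. 1 / real (k n)) \<longlonglongrightarrow> 0"
    using tendsto_inverse_0_at_top[OF k_inf] by (simp add: inverse_eq_divide)
  ultimately have "(\<lambda>n. 1 / (2::real)^k n) \<longlonglongrightarrow> 0"
    by (intro Lim_null_comparison[OF _ inv_k] always_eventually allI) simp
  from tendsto_mult[OF scale this] have "h \<longlonglongrightarrow> 0" by simp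
  moreover have "0 < h n" for n
    using round(1)[of n] by (simp add: h_def add_pos_pos)
  ultimately show thesis using slope that by blast
qed

lemma zero_gap_ratio_tendsto_of_log_slope_tendsto:
  assumes excess: "(\<lambda>n. digit_excess x n / real n) \<longlonglongrightarrow> -1"
    and slope: "(log_slope takagi_ext x \<longlongrightarrow> L) (at_right 0)"
  shows "(\<lambda>n. real (zero_digit_pos x (Suc n)) / real (zero_digit_pos x n)) \<longlonglongrightarrow> 1"
proof (rule ccontr)
  define b where "b = zero_digit_pos x"
  assume "\<not> (\<lambda>n. real (zero_digit_pos x (Suc n)) / real (zero_digit_pos x n)) \<longlonglongrightarrow> 1"
  then obtain \<rho> where "0 < \<rho>" and often: "\<forall>m. \<exists>n\<ge>m. \<not> norm (real (b (Suc n)) / real (b n) - 1) < \<rho>"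
    unfolding LIMSEQ_iff b_def by blast
  define Q where "Q = {n. (1 + \<rho>) * real (b n) \<le> real (b (Suc n))}"
  have "\<exists>n\<ge>m. n \<in> Q" for m
  proof -
    obtain n where "m \<le> n" and n: "\<not> norm (real (b (Suc n)) / real (b n) - 1) < \<rho>" using often by blast
    have "b n < b (Suc n)" unfolding b_def by (simp add: strict_mono_less strict_mono_zero_digit_pos)
    moreover have "1 \<le> b n" unfolding b_def by (rule zero_digit_pos_props)
    ultimately have "n \<in> Q" using n by (simp add: Q_def field_simps)
    then show ?thesis using \<open>m \<le> n\<close> by blast
  qed
  then have Q: "infinite Q" by (simp add: infinite_nat_iff_unbounded_le)
  have limit_value: "L = (\<theta> - 1) / (1 + \<theta>)" if \<theta>: "0 < \<theta>" "\<theta> < \<rho>" for \<theta>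
  proof -
    have gap: "(1 + \<rho>) * real (b (enumerate Q n)) \<le> real (b (Suc (enumerate Q n)))" for n
      using enumerate_in_set[OF Q] unfolding Q_def by simp
    obtain h where h: "\<And>n. 0 < h n" "h \<longlonglongrightarrow> 0"
      "(\<lambda>n. log_slope takagi_ext x (h n)) \<longlonglongrightarrow> (\<theta> - 1) / (1 + \<theta>)"
      using takagi_ext_slope_along_round_ups[OF excess strict_mono_enumerate[OF Q] gap[unfolded b_def] \<theta>]
      by blast
    have "filterlim h (at_right 0) sequentially"
    proof -
      have "\<forall>n. h n \<in> {0<..} \<and> h n \<noteq> 0" using h(1) by (simp add: less_imp_neq[symmetric])
      then show ?thesis unfolding filterlim_at using h(2) by (simp add: always_eventually)
    qed
    with slope have "(\<lambda>n. log_slope takagi_ext x (h n)) \<longlonglongrightarrow> L" by (rule filterlim_compose)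
    with h(3) show ?thesis by (rule LIMSEQ_unique[symmetric])
  qed
  have "(\<rho>/3 - 1) / (1 + \<rho>/3) = (2*\<rho>/3 - 1) / (1 + 2*\<rho>/3)"
    using limit_value[of "\<rho>/3"] limit_value[of "2*\<rho>/3"] \<open>0 < \<rho>\<close> by simp
  then show False using \<open>0 < \<rho>\<close> by (simp add: field_simps)
qed

lemma log_slope_takagi_eventually_eq:
  assumes "0 \<le> x" "x < 1"
  shows "\<forall>\<^sub>F h in at_right 0. log_slope takagi x h = log_slope takagi_ext x h"
  unfolding eventually_at_right_field
proof (intro exI[of _ "1 - x"] conjI allI impI)
  fix h :: real assume "0 < h" "h < 1 - x"
  then show "log_slope takagi x h = log_slope takagi_ext x h"
    using assms takagi_eq_takagi_ext[of x] takagi_eq_takagi_ext[of "x + h"] by (simp add: log_slope_def)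
qed (use assms in simp)

lemma digit_excess_tendsto:
  assumes "(\<lambda>n. (\<Sum>k=1..n. real (bdigit x k)) / real n) \<longlonglongrightarrow> d1"
  shows "(\<lambda>n. digit_excess x n / real n) \<longlonglongrightarrow> 1 - 2 * d1"
proof -
  have excess: "digit_excess x n = real n - 2 * (\<Sum>k=1..n. real (bdigit x k))" for n
    unfolding digit_excess_def by (simp add: sum_subtractf sum_distrib_left sum.atLeast1_atMost_eq)
  have "\<forall>\<^sub>F n in sequentially. 1 - 2 * ((\<Sum>k=1..n. real (bdigit x k)) / real n) = digit_excess x n / real n"
    using eventually_gt_at_top[of 0] by (rule eventually_mono) (simp add: excess field_simps)
  moreover have "(\<lambda>n. 1 - 2 * ((\<Sum>k=1..n. real (bdigit x k)) / real n)) \<longlonglongrightarrow> 1 - 2 * d1"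
    by (intro tendsto_intros assms)
  ultimately show ?thesis by (rule Lim_transform_eventually[rotated])
qed

theorem lemma3:
  fixes x d1 :: real
  assumes "0 \<le> x" and "x < 1"
    and d1: "(\<lambda>n. (\<Sum>k=1..n. real (bdigit x k)) / real n) \<longlonglongrightarrow> d1"
  shows "(d1 < 1 \<longrightarrow>
           ((\<lambda>h. (takagi (x + h) - takagi x) / (h * log 2 (1 / \<bar>h\<bar>)))
              \<longlongrightarrow> (1 - d1) - d1) (at_right 0))
       \<and> (d1 = 1 \<longrightarrow>
           ((\<exists>L. ((\<lambda>h. (takagi (x + h) - takagi x) / (h * log 2 (1 / \<bar>h\<bar>)))
                     \<longlongrightarrow> L) (at_right 0))
             \<longleftrightarrow> (\<lambda>n. real (enumerate (zero_digits x) (Suc n)) / real (enumerate (zero_digits x) n))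
                    \<longlonglongrightarrow> 1)
         \<and> ((\<lambda>n. real (enumerate (zero_digits x) (Suc n)) / real (enumerate (zero_digits x) n))
                    \<longlonglongrightarrow> 1
             \<longrightarrow> ((\<lambda>h. (takagi (x + h) - takagi x) / (h * log 2 (1 / \<bar>h\<bar>)))
                   \<longlongrightarrow> -1) (at_right 0)))"
proof -
  have slope_takagi: "(\<lambda>h. (takagi (x + h) - takagi x) / (h * log 2 (1 / \<bar>h\<bar>))) = log_slope takagi x"
    by (simp add: fun_eq_iff log_slope_def)
  have to_ext: "(log_slope takagi x \<longlongrightarrow> L) (at_right 0) \<longleftrightarrow> (log_slope takagi_ext x \<longlongrightarrow> L) (at_right 0)"
    for L by (rule tendsto_cong[OF log_slope_takagi_eventually_eq[OF assms(1,2)]])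
  have excess: "(\<lambda>n. digit_excess x n / real n) \<longlonglongrightarrow> 1 - 2 * d1"
    using d1 by (rule digit_excess_tendsto)
  have "d1 < 1 \<Longrightarrow> (log_slope takagi_ext x \<longlongrightarrow> (1 - d1) - d1) (at_right 0)"
    using takagi_ext_slope_tendsto[OF excess short_one_runs_of_density_less_1[OF d1]] by simp
  moreover have "(\<lambda>n. real (zero_digit_pos x (Suc n)) / real (zero_digit_pos x n)) \<longlonglongrightarrow> 1
      \<Longrightarrow> d1 = 1 \<Longrightarrow> (log_slope takagi_ext x \<longlongrightarrow> -1) (at_right 0)"
    using takagi_ext_slope_tendsto[OF excess short_one_runs_of_zero_gap_ratio] by simp
  moreover have "(log_slope takagi_ext x \<longlongrightarrow> L) (at_right 0) \<Longrightarrow> d1 = 1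
      \<Longrightarrow> (\<lambda>n. real (zero_digit_pos x (Suc n)) / real (zero_digit_pos x n)) \<longlonglongrightarrow> 1" for L
    using zero_gap_ratio_tendsto_of_log_slope_tendsto[of x L] excess by simp
  ultimately show ?thesis unfolding slope_takagi to_ext by blast
qed

end
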